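(* Let $m \geq 3$ be an integer and let $\alpha$ be a real number. Then there are only finitely many pairs $(x,y)$ of positive integers with $\gcd(x,y)=1$ such that $$\sin\bigl(m \cdot \arctan(y/x)\bigr) = \alpha .$$
   Context: Here $\arctan$ denotes the principal branch, so that for positive integers $x,y$ the angle $\theta = \arctan(y/x)$ lies in $(0,\pi/2)$ and is the acute angle of the right triangle with legs $x$ (adjacent) and $y$ (opposite). A pair $(x,y)$ of positive integers is called primitive if $\gcd(x,y)=1$. *)

theory Defs
  imports "HOL-Analysis.Analysis"
begin

end

theory Submission
  imports Defs
begin

text \<open>The acute angle of a primitive pair determines the pair, since it determines the reduced
  fraction \<open>y/x\<close>, and \<open>sin (m\<theta>) = \<alpha>\<close> has only finitely many solutions \<open>\<theta>\<close> in the bounded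
  interval \<open>[0, \<pi>/2]\<close>, because every solution of \<open>sin s = \<alpha>\<close> lies in one of two arithmetic
  progressions with difference \<open>2\<pi>\<close>.\<close>

lemma finite_sin_eq_in_interval:
  fixes a b c :: real
  shows "finite {s. a \<le> s \<and> s \<le> b \<and> sin s = c}"
proof (cases "\<exists>t. sin t = c")
  case False
  then show ?thesis by simp
next
  case True
  then obtain t where t: "sin t = c" by blast
  define K1 where "K1 = {n \<in> \<int>. (a - t) / (2 * pi) \<le> n \<and> n \<le> (b - t) / (2 * pi)}"
  define K2 where "K2 = {n \<in> \<int>. (a + t - pi) / (2 * pi) \<le> n \<and> n \<le> (b + t - pi) / (2 * pi)}"
  have "{s. a \<le> s \<and> s \<le> b \<and> sin s = c}
          \<subseteq> (\<lambda>n. t + 2 * n * pi) ` K1 \<union> (\<lambda>n. - t + (2 * n + 1) * pi) ` K2"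
  proof
    fix s assume s: "s \<in> {s. a \<le> s \<and> s \<le> b \<and> sin s = c}"
    then obtain n where "n \<in> \<int>" and "s = t + 2 * n * pi \<or> s = - t + (2 * n + 1) * pi"
      using t sin_eq[of s t] by auto
    then show "s \<in> (\<lambda>n. t + 2 * n * pi) ` K1 \<union> (\<lambda>n. - t + (2 * n + 1) * pi) ` K2"
      using s pi_gt_zero unfolding K1_def K2_def by (auto simp: field_simps)
  qed
  moreover have "finite K1" "finite K2"
    unfolding K1_def K2_def by (rule finite_int_segment)+
  ultimately show ?thesis by (meson finite_Un finite_imageI finite_subset)
qed

lemma finite_sin_mult_eq_in_interval:
  fixes a b c \<alpha> :: real
  assumes "c \<noteq> 0"
  shows "finite {t. a \<le> t \<and> t \<le> b \<and> sin (c * t) = \<alpha>}"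
proof -
  define R where "R = \<bar>c\<bar> * (\<bar>a\<bar> + \<bar>b\<bar>)"
  have "{t. a \<le> t \<and> t \<le> b \<and> sin (c * t) = \<alpha>} \<subseteq> (\<lambda>s. s / c) ` {s. - R \<le> s \<and> s \<le> R \<and> sin s = \<alpha>}"
  proof
    fix t assume t: "t \<in> {t. a \<le> t \<and> t \<le> b \<and> sin (c * t) = \<alpha>}"
    then have "\<bar>c * t\<bar> \<le> R"
      unfolding R_def by (auto simp: abs_mult intro!: mult_left_mono)
    then show "t \<in> (\<lambda>s. s / c) ` {s. - R \<le> s \<and> s \<le> R \<and> sin s = \<alpha>}"
      using t assms by (intro image_eqI[of _ _ "c * t"]) auto
  qed
  then show ?thesis
    by (rule finite_subset) (intro finite_imageI finite_sin_eq_in_interval)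
qed

lemma inj_on_ratio_coprime:
  "inj_on (\<lambda>(x::nat, y::nat). real y / real x) {(x, y). x > 0 \<and> coprime x y}"
proof (rule inj_onI, clarify)
  fix x y x' y' :: nat
  assume "x > 0" "coprime x y" "x' > 0" "coprime x' y'" "real y / real x = real y' / real x'"
  then have "real (y * x') = real (y' * x)"
    by (simp add: field_simps)
  then have "y * x' = y' * x"
    by (simp only: of_nat_eq_iff)
  moreover have "coprime y x" "coprime y' x'"
    using \<open>coprime x y\<close> \<open>coprime x' y'\<close> by (simp_all add: coprime_commute)
  ultimately show "x = x' \<and> y = y'"
    using coprime_crossproduct_nat by blast
qed

theorem mainTheorem1:
  fixes m :: nat and \<alpha> :: real
  assumes "m \<ge> 3"
  shows "finite {(x::nat, y::nat). x > 0 \<and> y > 0 \<and> gcd x y = 1 \<and>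
                  sin (real m * arctan (real y / real x)) = \<alpha>}"
    (is "finite ?P")
proof -
  let ?r = "\<lambda>(x::nat, y::nat). real y / real x"
  have "inj_on ?r ?P"
    by (rule inj_on_subset[OF inj_on_ratio_coprime]) (auto simp: coprime_iff_gcd_eq_1)
  then have "inj_on (arctan \<circ> ?r) ?P"
    by (rule comp_inj_on) (simp add: inj_on_def arctan_eq_iff)
  moreover have "finite {t. 0 \<le> t \<and> t \<le> pi / 2 \<and> sin (real m * t) = \<alpha>}"
    using assms by (intro finite_sin_mult_eq_in_interval) simp
  moreover have "(arctan \<circ> ?r) ` ?P \<subseteq> {t. 0 \<le> t \<and> t \<le> pi / 2 \<and> sin (real m * t) = \<alpha>}"
    using arctan_ubound by (auto intro: less_imp_le)
  ultimately show ?thesis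
    by (meson finite_imageD finite_subset)
qed

end
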